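(* Let $X$ have the Cauchy distribution with location $\mu\in\mathbb{R}$ and scale $\sigma>0$, i.e. density $\frac1\sigma f_0\big(\frac{x-\mu}{\sigma}\big)$ with $f_0(z)=\frac{1}{\pi(1+z^2)}$, and let $F_0$ be the CDF of $f_0$. For $c>1$, the unique positive root of $\frac{f_0(\frac{c}{c+1}\theta)}{f_0(\frac{c}{c-1}\theta)}=\frac{c+1}{c-1}$ is $\theta(c)=\frac{\sqrt{c^2-1}}{c}$, and the infimum coverage $$\psi(c)=\inf_{\mu,\sigma}P_{\mu,\sigma}\big(X-c|X|\le\mu\le X+c|X|\big)= F_0\Big(\frac{c}{c+1}\theta(c)\Big)+1-F_0\Big(\frac{c}{c-1}\theta(c)\Big)$$ is continuous in $c$ and satisfies $\psi(c)\to 1/2$ as $c\downarrow 1$ and $\psi(c)\to1$ as $c\to\infty$. Consequently, for every $\alpha$ with $0<\alpha<1/2$ there exists $c=c(\alpha)>1$ such that $\inf_{\mu\in\mathbb{R},\sigma>0}P_{\mu,\sigma}\big(X-c|X|\le\mu\le X+c|X|\big)=1-\alpha$. *)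

theory Defs
  imports "HOL-Probability.Probability"
begin

definition f0 :: "real \<Rightarrow> real" where
  "f0 z = 1 / (pi * (1 + z^2))"

definition std_cauchy :: "real measure" where
  "std_cauchy = density lborel (\<lambda>z. ennreal (f0 z))"

definition F0 :: "real \<Rightarrow> real" where
  "F0 z = cdf std_cauchy z"

definition cauchy_dist :: "real \<Rightarrow> real \<Rightarrow> real measure" where
  "cauchy_dist \<mu> \<sigma> = density lborel (\<lambda>x. ennreal (f0 ((x - \<mu>) / \<sigma>) / \<sigma>))"

definition coverage :: "real \<Rightarrow> real \<Rightarrow> real \<Rightarrow> real" where
  "coverage c \<mu> \<sigma> = measure (cauchy_dist \<mu> \<sigma>) {x. x - c * \<bar>x\<bar> \<le> \<mu> \<and> \<mu> \<le> x + c * \<bar>x\<bar>}"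

definition inf_coverage :: "real \<Rightarrow> real" where
  "inf_coverage c = (INF p \<in> (UNIV :: real set) \<times> {0<..}. coverage c (fst p) (snd p))"

definition theta :: "real \<Rightarrow> real" where
  "theta c = sqrt (c^2 - 1) / c"

definition psi :: "real \<Rightarrow> real" where
  "psi c = F0 (c / (c + 1) * theta c) + 1 - F0 (c / (c - 1) * theta c)"

end

theory Submission
  imports Defs "HOL-Real_Asymp.Real_Asymp"
begin

text \<open>The coverage event fails exactly on the open interval between the roots -\<mu>/(c-1) and
\<mu>/(c+1) of the quadratic inequality (x - \<mu>)^2 \<le> (c x)^2, so with k = c |\<mu>/\<sigma>| the coverage is
1 - (arctan (k/(c-1)) - arctan (k/(c+1)))/pi. By the subtraction formula for arctan this
difference equals arctan (2k/(s^2 + k^2)) with s = sqrt (c^2 - 1), and AM-GM shows it is maximal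
exactly at k = s, i.e. at \<mu>/\<sigma> = theta c. Hence the infimum is attained and equals
psi c = 1/2 + arctan (sqrt (c^2 - 1))/pi, from which continuity, the limits and the solvability
of psi c = 1 - \<alpha> can be read off.\<close>

lemma f0_pos: "f0 z > 0"
  unfolding f0_def by (simp add: add_pos_nonneg)

lemma f0_quotient: "f0 a / f0 b = (1 + b^2) / (1 + a^2)"
  unfolding f0_def by simp

lemma f0_quotient_eq_iff:
  fixes c k :: real
  assumes "c > 1"
  shows "f0 (k / (c + 1)) / f0 (k / (c - 1)) = (c + 1) / (c - 1) \<longleftrightarrow> k^2 = c^2 - 1"
proof -
  have pos: "c - 1 > 0" "c + 1 > 0" using assms by auto
  have "c^2 - 1 > 0" using assms by (simp add: one_less_power)
  have scaled: "(1 + (k / p)^2) * p = p + k^2 / p" if "p > 0" for p :: real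
    using that by (simp add: power2_eq_square field_simps)
  have "(1 + (k / (c - 1))^2) * (c - 1) - (1 + (k / (c + 1))^2) * (c + 1)
      = k^2 * (1 / (c - 1) - 1 / (c + 1)) - 2"
    unfolding scaled[OF pos(1)] scaled[OF pos(2)] by (simp add: algebra_simps)
  also have "1 / (c - 1) - 1 / (c + 1) = 2 / ((c - 1) * (c + 1))"
    using pos by (simp add: field_simps)
  also have "(c - 1) * (c + 1) = c^2 - 1"
    by (simp add: power2_eq_square algebra_simps)
  finally have cross: "(1 + (k / (c - 1))^2) * (c - 1) = (c + 1) * (1 + (k / (c + 1))^2)
      \<longleftrightarrow> k^2 * (2 / (c^2 - 1)) = 2"
    by (simp only: mult.commute[of "c + 1"]) linarith
  have "f0 (k / (c + 1)) / f0 (k / (c - 1)) = (c + 1) / (c - 1)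
      \<longleftrightarrow> (1 + (k / (c - 1))^2) * (c - 1) = (c + 1) * (1 + (k / (c + 1))^2)"
    unfolding f0_quotient using pos
    by (intro frac_eq_eq) (simp_all add: add_nonneg_eq_0_iff)
  also have "\<dots> \<longleftrightarrow> k^2 = c^2 - 1"
    unfolding cross using \<open>c^2 - 1 > 0\<close> by (auto simp: field_simps)
  finally show ?thesis .
qed

lemma theta_pos: "c > 1 \<Longrightarrow> theta c > 0"
  unfolding theta_def by simp

lemma mult_theta: "c > 0 \<Longrightarrow> c * theta c = sqrt (c^2 - 1)"
  unfolding theta_def by simp

lemma cauchy_ratio_eq_iff_theta:
  fixes c t :: real
  assumes "c > 1" "t > 0"
  shows "f0 (c / (c + 1) * t) / f0 (c / (c - 1) * t) = (c + 1) / (c - 1) \<longleftrightarrow> t = theta c"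
proof -
  have "f0 (c / (c + 1) * t) / f0 (c / (c - 1) * t) = (c + 1) / (c - 1) \<longleftrightarrow> (c * t)^2 = c^2 - 1"
    using f0_quotient_eq_iff[OF assms(1), of "c * t"] by simp
  also have "\<dots> \<longleftrightarrow> c * t = sqrt (c^2 - 1)"
    using assms by (auto simp: real_sqrt_unique)
  also have "\<dots> \<longleftrightarrow> c * t = c * theta c"
    using assms mult_theta[of c] by simp
  also have "\<dots> \<longleftrightarrow> t = theta c"
    using assms by simp
  finally show ?thesis .
qed

lemma cauchy_density_measurable [measurable]:
  "(\<lambda>x. f0 ((x - \<mu>) / \<sigma>) / \<sigma>) \<in> borel_measurable borel"
  unfolding f0_def by measurable

lemma sets_cauchy_dist [simp, measurable_cong]: "sets (cauchy_dist \<mu> \<sigma>) = sets borel"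
  by (simp add: cauchy_dist_def)

lemma space_cauchy_dist [simp]: "space (cauchy_dist \<mu> \<sigma>) = UNIV"
  by (simp add: cauchy_dist_def)

lemma emeasure_cauchy_dist_singleton: "emeasure (cauchy_dist \<mu> \<sigma>) {a} = 0"
  unfolding cauchy_dist_def
  by (subst emeasure_density) (auto intro: nn_integral_null_set simp: null_sets_def)

context
  fixes \<mu> \<sigma> :: real
  assumes scale_pos: "\<sigma> > 0"
begin

lemma has_real_derivative_cauchy_arctan:
  "((\<lambda>x. arctan ((x - \<mu>) / \<sigma>) / pi) has_real_derivative f0 ((x - \<mu>) / \<sigma>) / \<sigma>) (at x)"
proof -
  have "1 + ((x - \<mu>) / \<sigma>)^2 > 0" by (simp add: add_pos_nonneg)
  then have "inverse (1 + ((x - \<mu>) / \<sigma>)^2) * (1 / \<sigma>) / pi = f0 ((x - \<mu>) / \<sigma>) / \<sigma>"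
    unfolding f0_def using scale_pos by (simp add: field_simps)
  then show ?thesis
    using scale_pos by (auto intro!: derivative_eq_intros)
qed

lemma tendsto_cauchy_arctan_at_top: "((\<lambda>x. arctan ((x - \<mu>) / \<sigma>) / pi) \<longlongrightarrow> 1/2) at_top"
proof -
  have "filterlim (\<lambda>x. (x - \<mu>) / \<sigma>) at_top at_top"
    unfolding filterlim_at_top eventually_at_top_linorder
    using scale_pos by (metis add.commute le_diff_eq pos_le_divide_eq)
  from tendsto_divide[OF filterlim_compose[OF tendsto_arctan_at_top this] tendsto_const[of pi]]
  show ?thesis by simp
qed

lemma tendsto_cauchy_arctan_at_bot: "((\<lambda>x. arctan ((x - \<mu>) / \<sigma>) / pi) \<longlongrightarrow> - 1/2) at_bot"
proof -
  have "filterlim (\<lambda>x. (x - \<mu>) / \<sigma>) at_bot at_bot"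
    unfolding filterlim_at_bot eventually_at_bot_linorder
    using scale_pos by (metis add.commute diff_le_eq pos_divide_le_eq)
  from tendsto_divide[OF filterlim_compose[OF tendsto_arctan_at_bot this] tendsto_const[of pi]]
  show ?thesis by simp
qed

lemma emeasure_cauchy_dist_atLeast:
  "emeasure (cauchy_dist \<mu> \<sigma>) {a..} = ennreal (1/2 - arctan ((a - \<mu>) / \<sigma>) / pi)"
  unfolding cauchy_dist_def
  using scale_pos
  by (subst emeasure_density)
     (auto intro!: nn_integral_FTC_atLeast has_real_derivative_cauchy_arctan
        tendsto_cauchy_arctan_at_top less_imp_le divide_pos_pos f0_pos)

lemma prob_space_cauchy_dist: "prob_space (cauchy_dist \<mu> \<sigma>)"
proof
  let ?M = "cauchy_dist \<mu> \<sigma>"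
  have "filterlim (\<lambda>n::nat. - real n) at_bot sequentially"
    by (simp add: filterlim_uminus_at_bot filterlim_real_sequentially)
  from tendsto_diff[OF tendsto_const[of "1/2"] filterlim_compose[OF tendsto_cauchy_arctan_at_bot this]]
  have "(\<lambda>n. 1/2 - arctan ((- real n - \<mu>) / \<sigma>) / pi) \<longlonglongrightarrow> 1"
    by simp
  from tendsto_ennrealI[OF this] have "(\<lambda>n. emeasure ?M {- real n..}) \<longlonglongrightarrow> 1"
    by (simp add: emeasure_cauchy_dist_atLeast)
  moreover have "(\<lambda>n. emeasure ?M {- real n..}) \<longlonglongrightarrow> emeasure ?M (\<Union>n. {- real n..})"
    by (rule Lim_emeasure_incseq) (auto simp: incseq_def)
  moreover have "(\<Union>n. {- real n..}) = UNIV"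
    by (auto intro: real_arch_simple simp: minus_le_iff)
  ultimately show "emeasure ?M (space ?M) = 1"
    using LIMSEQ_unique by fastforce
qed

lemma measure_cauchy_dist_atLeast:
  "measure (cauchy_dist \<mu> \<sigma>) {a..} = 1/2 - arctan ((a - \<mu>) / \<sigma>) / pi"
proof -
  have "arctan ((a - \<mu>) / \<sigma>) < pi / 2"
    using arctan_ubound by blast
  then have "0 \<le> 1/2 - arctan ((a - \<mu>) / \<sigma>) / pi"
    by (simp add: field_simps)
  then show ?thesis
    by (simp add: measure_def emeasure_cauchy_dist_atLeast)
qed

lemma measure_cauchy_dist_greaterThan:
  "measure (cauchy_dist \<mu> \<sigma>) {a<..} = 1/2 - arctan ((a - \<mu>) / \<sigma>) / pi"
proof -
  have "measure (cauchy_dist \<mu> \<sigma>) ({a..} - {a}) = measure (cauchy_dist \<mu> \<sigma>) {a..}"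
    by (rule measure_Diff_null_set) (auto simp: null_sets_def emeasure_cauchy_dist_singleton)
  moreover have "{a..} - {a} = {a<..}" by auto
  ultimately show ?thesis by (simp add: measure_cauchy_dist_atLeast)
qed

lemma measure_cauchy_dist_atMost:
  "measure (cauchy_dist \<mu> \<sigma>) {..a} = 1/2 + arctan ((a - \<mu>) / \<sigma>) / pi"
proof -
  interpret prob_space "cauchy_dist \<mu> \<sigma>" by (rule prob_space_cauchy_dist)
  have "{..a} = UNIV - {a<..}" by auto
  then show ?thesis using prob_compl[of "{a<..}"] by (simp add: measure_cauchy_dist_greaterThan)
qed

lemma measure_cauchy_dist_greaterThanLessThan:
  assumes "a \<le> b"
  shows "measure (cauchy_dist \<mu> \<sigma>) {a<..<b}
    = (arctan ((b - \<mu>) / \<sigma>) - arctan ((a - \<mu>) / \<sigma>)) / pi"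
proof (cases "a = b")
  case False
  interpret prob_space "cauchy_dist \<mu> \<sigma>" by (rule prob_space_cauchy_dist)
  have "{a<..<b} = {a<..} - {b..}" by auto
  moreover have "{b..} \<subseteq> {a<..}" using assms False by auto
  ultimately show ?thesis
    by (simp add: finite_measure_Diff measure_cauchy_dist_atLeast measure_cauchy_dist_greaterThan
        diff_divide_distrib)
qed simp

end

lemma F0_eq: "F0 z = 1/2 + arctan z / pi"
proof -
  have "std_cauchy = cauchy_dist 0 1"
    unfolding std_cauchy_def cauchy_dist_def by simp
  then show ?thesis
    unfolding F0_def cdf_def using measure_cauchy_dist_atMost[of 1 0 z] by simp
qed

lemma covers_iff_product_nonneg:
  fixes c \<mu> x :: real
  assumes "c > 1"
  shows "x - c * \<bar>x\<bar> \<le> \<mu> \<and> \<mu> \<le> x + c * \<bar>x\<bar> \<longleftrightarrow> 0 \<le> (x - - \<mu> / (c - 1)) * (x - \<mu> / (c + 1))"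
proof -
  have pos: "c - 1 > 0" "c + 1 > 0" using assms by auto
  have "(c * x)^2 - (x - \<mu>)^2 = ((c - 1) * x + \<mu>) * ((c + 1) * x - \<mu>)"
    by (simp add: algebra_simps power2_eq_square)
  also have "(c - 1) * x + \<mu> = (c - 1) * (x - - \<mu> / (c - 1))"
    using pos by (simp add: field_simps)
  also have "(c + 1) * x - \<mu> = (c + 1) * (x - \<mu> / (c + 1))"
    using pos by (simp add: field_simps)
  also have "(c - 1) * (x - - \<mu> / (c - 1)) * ((c + 1) * (x - \<mu> / (c + 1)))
      = ((c - 1) * (c + 1)) * ((x - - \<mu> / (c - 1)) * (x - \<mu> / (c + 1)))"
    by (simp only: mult_ac)
  finally have factor: "(c * x)^2 - (x - \<mu>)^2 = ((c - 1) * (c + 1)) * ((x - - \<mu> / (c - 1)) * (x - \<mu> / (c + 1)))" .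
  have "x - c * \<bar>x\<bar> \<le> \<mu> \<and> \<mu> \<le> x + c * \<bar>x\<bar> \<longleftrightarrow> \<bar>x - \<mu>\<bar> \<le> \<bar>c * x\<bar>"
    using pos by (auto simp: abs_mult)
  also have "\<dots> \<longleftrightarrow> 0 \<le> (c * x)^2 - (x - \<mu>)^2"
    by (simp add: abs_le_square_iff)
  also have "\<dots> \<longleftrightarrow> 0 \<le> (x - - \<mu> / (c - 1)) * (x - \<mu> / (c + 1))"
    unfolding factor using mult_pos_pos[OF pos] by (metis mult_le_cancel_left_pos mult_zero_right)
  finally show ?thesis .
qed

lemma product_nonneg_iff_not_between:
  fixes a b x :: real
  assumes "a \<le> b"
  shows "0 \<le> (x - a) * (x - b) \<longleftrightarrow> x \<notin> {a<..<b}"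
  using assms by (auto simp: zero_le_mult_iff)

lemma coverage_eq_one_minus_interval:
  assumes "\<sigma> > 0" "a \<le> b"
    and covers: "\<And>x. x - c * \<bar>x\<bar> \<le> \<mu> \<and> \<mu> \<le> x + c * \<bar>x\<bar> \<longleftrightarrow> x \<notin> {a<..<b}"
  shows "coverage c \<mu> \<sigma> = 1 - (arctan ((b - \<mu>) / \<sigma>) - arctan ((a - \<mu>) / \<sigma>)) / pi"
proof -
  interpret prob_space "cauchy_dist \<mu> \<sigma>" using assms(1) by (rule prob_space_cauchy_dist)
  have "{x. x - c * \<bar>x\<bar> \<le> \<mu> \<and> \<mu> \<le> x + c * \<bar>x\<bar>} = space (cauchy_dist \<mu> \<sigma>) - {a<..<b}"
    unfolding space_cauchy_dist using covers by blast
  then have "coverage c \<mu> \<sigma> = 1 - prob {a<..<b}"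
    unfolding coverage_def by (simp add: prob_compl del: space_cauchy_dist)
  then show ?thesis
    using measure_cauchy_dist_greaterThanLessThan[OF assms(1,2)] by simp
qed

lemma coverage_cauchy:
  assumes "c > 1" "\<sigma> > 0"
  shows "coverage c \<mu> \<sigma>
    = 1 - (arctan (c * \<bar>\<mu> / \<sigma>\<bar> / (c - 1)) - arctan (c * \<bar>\<mu> / \<sigma>\<bar> / (c + 1))) / pi"
proof -
  have pos: "c - 1 > 0" "c + 1 > 0" using assms by auto
  show ?thesis
  proof (cases "\<mu> \<ge> 0")
    case True
    have abs: "\<bar>\<mu> / \<sigma>\<bar> = \<mu> / \<sigma>" using True assms(2) by simp
    have "- \<mu> / (c - 1) \<le> 0" "0 \<le> \<mu> / (c + 1)"
      using True pos by (simp_all add: divide_nonpos_pos)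
    then have le: "- \<mu> / (c - 1) \<le> \<mu> / (c + 1)" by linarith
    have "coverage c \<mu> \<sigma>
      = 1 - (arctan ((\<mu> / (c + 1) - \<mu>) / \<sigma>) - arctan ((- \<mu> / (c - 1) - \<mu>) / \<sigma>)) / pi"
      using covers_iff_product_nonneg[OF assms(1)] product_nonneg_iff_not_between[OF le]
      by (intro coverage_eq_one_minus_interval[OF assms(2) le]) (simp only:)
    moreover have "(\<mu> / (c + 1) - \<mu>) / \<sigma> = - (c * \<bar>\<mu> / \<sigma>\<bar> / (c + 1))"
      "(- \<mu> / (c - 1) - \<mu>) / \<sigma> = - (c * \<bar>\<mu> / \<sigma>\<bar> / (c - 1))"
      unfolding abs using pos assms(2) by (simp_all add: field_simps)
    ultimately show ?thesis by (simp add: arctan_minus)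
  next
    case False
    have abs: "\<bar>\<mu> / \<sigma>\<bar> = - \<mu> / \<sigma>" using False assms(2) by simp
    have "\<mu> / (c + 1) \<le> 0" "0 \<le> - \<mu> / (c - 1)"
      using False pos by (simp_all add: divide_nonpos_pos)
    then have le: "\<mu> / (c + 1) \<le> - \<mu> / (c - 1)" by linarith
    have "coverage c \<mu> \<sigma>
      = 1 - (arctan ((- \<mu> / (c - 1) - \<mu>) / \<sigma>) - arctan ((\<mu> / (c + 1) - \<mu>) / \<sigma>)) / pi"
      using covers_iff_product_nonneg[OF assms(1)] product_nonneg_iff_not_between[OF le]
      by (intro coverage_eq_one_minus_interval[OF assms(2) le]) (simp only: mult.commute)
    moreover have "(\<mu> / (c + 1) - \<mu>) / \<sigma> = c * \<bar>\<mu> / \<sigma>\<bar> / (c + 1)"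
      "(- \<mu> / (c - 1) - \<mu>) / \<sigma> = c * \<bar>\<mu> / \<sigma>\<bar> / (c - 1)"
      unfolding abs using pos assms(2) by (simp_all add: field_simps)
    ultimately show ?thesis by simp
  qed
qed

lemma arctan_diff:
  fixes x y :: real
  assumes "x \<ge> 0" "y \<ge> 0"
  shows "arctan x - arctan y = arctan ((x - y) / (1 + x * y))"
proof (rule arctan_unique[symmetric])
  have x: "0 \<le> arctan x" "arctan x < pi/2" and y: "0 \<le> arctan y" "arctan y < pi/2"
    using assms arctan_ubound by auto
  then show bounds: "- (pi/2) < arctan x - arctan y" "arctan x - arctan y < pi/2"
    by linarith+
  have "cos (arctan x - arctan y) \<noteq> 0"
    using bounds by (intro cos_gt_zero_pi[THEN less_imp_neq, symmetric]) auto
  then show "tan (arctan x - arctan y) = (x - y) / (1 + x * y)"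
    by (simp add: tan_diff tan_arctan)
qed

lemma arctan_gap:
  fixes c k :: real
  assumes "c > 1" "k \<ge> 0"
  shows "arctan (k / (c - 1)) - arctan (k / (c + 1)) = arctan (2 * k / (c^2 - 1 + k^2))"
proof -
  have pos: "c - 1 > 0" "c + 1 > 0" using assms by auto
  have d: "(c - 1) * (c + 1) = c^2 - 1" by (simp add: power2_eq_square algebra_simps)
  have D: "c^2 - 1 > 0" using assms by (simp add: one_less_power)
  have "k / (c - 1) * (k / (c + 1)) = k^2 / (c^2 - 1)"
    unfolding d[symmetric] by (simp add: power2_eq_square)
  then have den: "1 + k / (c - 1) * (k / (c + 1)) = (c^2 - 1 + k^2) / (c^2 - 1)"
    using D by (simp add: add_divide_distrib)
  have num: "k / (c - 1) - k / (c + 1) = 2 * k / (c^2 - 1)"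
    unfolding d[symmetric] using pos by (simp add: field_simps)
  have "(k / (c - 1) - k / (c + 1)) / (1 + k / (c - 1) * (k / (c + 1)))
      = 2 * k / (c^2 - 1 + k^2)"
    unfolding num den using D by simp
  with assms pos show ?thesis by (simp add: arctan_diff)
qed

lemma two_mul_div_sum_squares_le:
  fixes s k :: real
  assumes "s > 0"
  shows "2 * k / (s^2 + k^2) \<le> 1 / s"
proof -
  have "2 * k * s \<le> s^2 + k^2"
    using sum_squares_bound[of k s] by (simp add: algebra_simps power2_eq_square) 
  moreover have "s^2 + k^2 > 0" using assms by (simp add: add_pos_nonneg)
  ultimately show ?thesis
    using assms by (simp add: divide_simps mult.commute)
qed

lemma psi_eq_arctan:
  "psi c = 1 - (arctan (c * theta c / (c - 1)) - arctan (c * theta c / (c + 1))) / pi"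
  unfolding psi_def F0_eq by (simp add: diff_divide_distrib)

lemma psi_eq_arctan_inverse:
  assumes "c > 1"
  shows "psi c = 1 - arctan (1 / sqrt (c^2 - 1)) / pi"
proof -
  define s where "s = sqrt (c^2 - 1)"
  have "s > 0" "c^2 - 1 = s^2" "c * theta c = s"
    using assms by (simp_all add: s_def mult_theta)
  then have "2 * s / (c^2 - 1 + s^2) = 1 / s"
    unfolding \<open>c^2 - 1 = s^2\<close> by (simp add: power2_eq_square)
  then show ?thesis
    unfolding psi_eq_arctan \<open>c * theta c = s\<close> arctan_gap[OF assms less_imp_le[OF \<open>s > 0\<close>]]
    by (simp add: s_def)
qed

lemma psi_closed_form:
  assumes "c > 1"
  shows "psi c = 1/2 + arctan (sqrt (c^2 - 1)) / pi"
proof -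
  have "sqrt (c^2 - 1) > 0" using assms by simp
  then have "arctan (1 / sqrt (c^2 - 1)) = pi/2 - arctan (sqrt (c^2 - 1))"
    using arctan_inverse[of "sqrt (c^2 - 1)"] by (simp add: inverse_eq_divide)
  then show ?thesis
    unfolding psi_eq_arctan_inverse[OF assms] by (simp add: diff_divide_distrib)
qed

lemma psi_le_coverage:
  assumes "c > 1" "\<sigma> > 0"
  shows "psi c \<le> coverage c \<mu> \<sigma>"
proof -
  define s where "s = sqrt (c^2 - 1)"
  define k where "k = c * \<bar>\<mu> / \<sigma>\<bar>"
  have "s > 0" "c^2 - 1 = s^2" "k \<ge> 0"
    using assms by (simp_all add: s_def k_def)
  then have "arctan (2 * k / (c^2 - 1 + k^2)) \<le> arctan (1 / s)"
    by (simp add: arctan_le_iff two_mul_div_sum_squares_le)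
  then show ?thesis
    unfolding psi_eq_arctan_inverse[OF assms(1)] coverage_cauchy[OF assms] k_def[symmetric]
      arctan_gap[OF assms(1) \<open>k \<ge> 0\<close>] s_def[symmetric]
    by (simp add: divide_right_mono)
qed

lemma coverage_theta_eq_psi:
  assumes "c > 1"
  shows "coverage c (theta c) 1 = psi c"
  unfolding coverage_cauchy[OF assms zero_less_one] psi_eq_arctan
  using theta_pos[OF assms] by simp

lemma inf_coverage_eq_psi:
  assumes "c > 1"
  shows "inf_coverage c = psi c"
  unfolding inf_coverage_def
proof (rule antisym)
  have "bdd_below ((\<lambda>p. coverage c (fst p) (snd p)) ` (UNIV \<times> {0<..}))"
    using psi_le_coverage[OF assms] by (auto intro!: bdd_belowI)
  then show "(INF p \<in> UNIV \<times> {0<..}. coverage c (fst p) (snd p)) \<le> psi c"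
    using cINF_lower[of _ _ "(theta c, 1)"] coverage_theta_eq_psi[OF assms] by fastforce
  show "psi c \<le> (INF p \<in> UNIV \<times> {0<..}. coverage c (fst p) (snd p))"
    using psi_le_coverage[OF assms] by (intro cINF_greatest) auto
qed

lemma continuous_on_psi: "continuous_on {1<..} psi"
proof -
  have "continuous_on {1<..} (\<lambda>c. 1/2 + arctan (sqrt (c^2 - 1)) / pi)"
    by (intro continuous_intros) simp
  then show ?thesis
    using continuous_on_cong[of "{1<..}" "{1<..}" psi] psi_closed_form by simp
qed

lemma tendsto_psi_at_right_1: "(psi \<longlongrightarrow> 1/2) (at_right 1)"
proof -
  have "((\<lambda>c. 1/2 + arctan (sqrt (c^2 - 1)) / pi) \<longlongrightarrow> 1/2) (at_right (1::real))"
    by real_asymp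
  moreover have "eventually (\<lambda>c. 1/2 + arctan (sqrt (c^2 - 1)) / pi = psi c) (at_right 1)"
    using eventually_at_right_less[of 1] by eventually_elim (simp add: psi_closed_form)
  ultimately show ?thesis by (rule Lim_transform_eventually)
qed

lemma tendsto_psi_at_top: "(psi \<longlongrightarrow> 1) at_top"
proof -
  have "((\<lambda>c. 1/2 + arctan (sqrt (c^2 - 1)) / pi) \<longlongrightarrow> 1) at_top"
    by real_asymp
  moreover have "eventually (\<lambda>c. 1/2 + arctan (sqrt (c^2 - 1)) / pi = psi c) at_top"
    using eventually_gt_at_top[of 1] by eventually_elim (simp add: psi_closed_form)
  ultimately show ?thesis by (rule Lim_transform_eventually)
qed

lemma ex_psi_eq_one_minus:
  assumes "0 < \<alpha>" "\<alpha> < 1/2"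
  shows "\<exists>c > 1. psi c = 1 - \<alpha>"
proof -
  define T where "T = tan ((1/2 - \<alpha>) * pi)"
  have angle: "0 < (1/2 - \<alpha>) * pi" "(1/2 - \<alpha>) * pi < pi/2"
    using assms by (simp_all add: field_simps)
  then have "T > 0" unfolding T_def by (simp add: tan_gt_zero)
  define c where "c = sqrt (1 + T^2)"
  have "c > 1" "sqrt (c^2 - 1) = T"
    using \<open>T > 0\<close> by (simp_all add: c_def)
  moreover have "arctan T = (1/2 - \<alpha>) * pi"
    unfolding T_def by (intro arctan_tan; use angle pi_gt_zero in linarith)
  ultimately show ?thesis
    by (intro exI[of _ c]) (simp add: psi_closed_form field_simps)
qed

theorem mainTheorem7:
  shows "(\<forall>c > 1. (\<exists>!t. t > 0 \<and> f0 (c / (c + 1) * t) / f0 (c / (c - 1) * t) = (c + 1) / (c - 1))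
                   \<and> theta c > 0
                   \<and> f0 (c / (c + 1) * theta c) / f0 (c / (c - 1) * theta c) = (c + 1) / (c - 1))
    \<and> (\<forall>c > 1. inf_coverage c = psi c)
    \<and> continuous_on {1<..} psi
    \<and> (psi \<longlongrightarrow> 1/2) (at_right 1)
    \<and> (psi \<longlongrightarrow> 1) at_top
    \<and> (\<forall>\<alpha>::real. 0 < \<alpha> \<and> \<alpha> < 1/2 \<longrightarrow> (\<exists>c > 1. inf_coverage c = 1 - \<alpha>))"
proof -
  have root: "(\<exists>!t. t > 0 \<and> f0 (c / (c + 1) * t) / f0 (c / (c - 1) * t) = (c + 1) / (c - 1))
      \<and> theta c > 0 \<and> f0 (c / (c + 1) * theta c) / f0 (c / (c - 1) * theta c) = (c + 1) / (c - 1)"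
    if "c > 1" for c
    using cauchy_ratio_eq_iff_theta[OF that] theta_pos[OF that]
    by (intro conjI ex1I[of _ "theta c"]) auto
  have level: "\<exists>c > 1. inf_coverage c = 1 - \<alpha>" if "0 < \<alpha>" "\<alpha> < 1/2" for \<alpha> :: real
    using ex_psi_eq_one_minus[OF that] inf_coverage_eq_psi by auto
  show ?thesis
    using root inf_coverage_eq_psi continuous_on_psi tendsto_psi_at_right_1 tendsto_psi_at_top level
    by blast
qed

end
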